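(* Let $K\in\mathbb{N}_0$. For every $s=(s_1,\dots,s_K)\in\{-,+\}^K$ let $g_s:\mathbb{R}^K\times\mathbb{R}\to\mathbb{R}$ be a continuous function such that for all $(\beta,\gamma)\in\mathbb{R}^K\times\mathbb{R}$: (i) $g_s(\beta,\gamma)$ is strictly increasing in $\gamma$; (ii) for all $k\in\{1,\dots,K\}$, if $s_k=+$ then $g_s(\beta,\gamma)$ is strictly increasing in $\beta_k$; (iii) for all $k\in\{1,\dots,K\}$, if $s_k=-$ then $g_s(\beta,\gamma)$ is strictly decreasing in $\beta_k$. Then the system of $2^K$ equations in $K+1$ variables $g_s(\beta,\gamma)=0$ for all $s\in\{-,+\}^K$ has at most one solution $(\beta,\gamma)$. *)

theory Defs
  imports "HOL-Analysis.Analysis"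
begin

end

theory Submission
  imports Defs
begin

text \<open>Given two solutions \<open>(\<beta>, \<gamma>)\<close> and \<open>(\<beta>', \<gamma>')\<close> with \<open>\<gamma> \<le> \<gamma>'\<close>, take the sign
  pattern \<open>s\<close> with \<open>s\<^sub>k = +\<close> iff \<open>\<beta>\<^sub>k \<le> \<beta>'\<^sub>k\<close>. Changing the coordinates of \<open>\<beta>\<close> into those of
  \<open>\<beta>'\<close> one at a time never decreases \<open>g\<^sub>s\<close>, and strictly increases it at every coordinate
  that actually changes; raising \<open>\<gamma>\<close> to \<open>\<gamma>'\<close> increases it strictly unless \<open>\<gamma> = \<gamma>'\<close>. So
  \<open>g\<^sub>s(\<beta>, \<gamma>) < g\<^sub>s(\<beta>', \<gamma>')\<close> unless the solutions coincide, contradicting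
  \<open>g\<^sub>s(\<beta>, \<gamma>) = 0 = g\<^sub>s(\<beta>', \<gamma>')\<close>.\<close>

lemma sign_monotone_less:
  fixes f :: "(nat \<Rightarrow> real) \<Rightarrow> real" and s :: "nat \<Rightarrow> bool"
  assumes up: "\<And>\<beta> k t t'. \<beta> \<in> {0..<K} \<rightarrow>\<^sub>E UNIV \<Longrightarrow> k < K \<Longrightarrow> s k \<Longrightarrow> t < t' \<Longrightarrow>
      f (\<beta>(k := t)) < f (\<beta>(k := t'))"
    and down: "\<And>\<beta> k t t'. \<beta> \<in> {0..<K} \<rightarrow>\<^sub>E UNIV \<Longrightarrow> k < K \<Longrightarrow> \<not> s k \<Longrightarrow> t < t' \<Longrightarrow>
      f (\<beta>(k := t)) > f (\<beta>(k := t'))"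
    and b: "b \<in> {0..<K} \<rightarrow>\<^sub>E UNIV" and b': "b' \<in> {0..<K} \<rightarrow>\<^sub>E UNIV"
    and oriented_up: "\<And>k. k < K \<Longrightarrow> s k \<Longrightarrow> b k \<le> b' k"
    and oriented_down: "\<And>k. k < K \<Longrightarrow> \<not> s k \<Longrightarrow> b' k \<le> b k"
    and "b \<noteq> b'"
  shows "f b < f b'"
proof -
  define m where "m j = (\<lambda>k. if k < j then b' k else b k)" for j
  have m_PiE: "m j \<in> {0..<K} \<rightarrow>\<^sub>E UNIV" for j
    using b b' by (auto simp: m_def PiE_def extensional_def)
  have outside: "b k = b' k" if "\<not> k < K" for k
    using PiE_arb[OF b] PiE_arb[OF b'] that by simp
  have step_less: "f (m j) < f (m (Suc j))" if "b j \<noteq> b' j" for j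
  proof -
    have "j < K" using outside that by blast
    have m_j: "m j = (m j)(j := b j)" and m_Suc: "m (Suc j) = (m j)(j := b' j)"
      by (auto simp: m_def fun_eq_iff less_Suc_eq)
    show ?thesis
    proof (cases "s j")
      case True
      then have "b j < b' j" using oriented_up \<open>j < K\<close> that by fastforce
      from up[OF m_PiE[of j] \<open>j < K\<close> True this] show ?thesis by (simp flip: m_j m_Suc)
    next
      case False
      then have "b' j < b j" using oriented_down \<open>j < K\<close> that by fastforce
      from down[OF m_PiE[of j] \<open>j < K\<close> False this] show ?thesis by (simp flip: m_j m_Suc)
    qed
  qed
  have step_le: "f (m j) \<le> f (m (Suc j))" for j
  proof (cases "b j = b' j")
    case True
    then have "m (Suc j) = m j" by (auto simp: m_def fun_eq_iff less_Suc_eq)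
    then show ?thesis by simp
  next
    case False
    then show ?thesis by (rule less_imp_le[OF step_less])
  qed
  obtain k where "b k \<noteq> b' k" using \<open>b \<noteq> b'\<close> by auto
  then have "k < K" using outside by blast
  have "f b = f (m 0)" by (simp add: m_def)
  also have "\<dots> \<le> f (m k)" by (rule lift_Suc_mono_le[of "\<lambda>j. f (m j)", OF step_le]) simp
  also have "\<dots> < f (m (Suc k))" by (rule step_less) fact
  also have "\<dots> \<le> f (m K)" by (rule lift_Suc_mono_le[of "\<lambda>j. f (m j)", OF step_le]) (use \<open>k < K\<close> in simp)
  also have "m K = b'" using outside by (auto simp: m_def fun_eq_iff)
  finally show ?thesis .
qed

lemma sign_monotone_strict_mono_less:
  fixes f :: "(nat \<Rightarrow> real) \<Rightarrow> real \<Rightarrow> real" and s :: "nat \<Rightarrow> bool"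
  assumes up: "\<And>\<beta> \<gamma> k t t'. \<beta> \<in> {0..<K} \<rightarrow>\<^sub>E UNIV \<Longrightarrow> k < K \<Longrightarrow> s k \<Longrightarrow> t < t' \<Longrightarrow>
      f (\<beta>(k := t)) \<gamma> < f (\<beta>(k := t')) \<gamma>"
    and down: "\<And>\<beta> \<gamma> k t t'. \<beta> \<in> {0..<K} \<rightarrow>\<^sub>E UNIV \<Longrightarrow> k < K \<Longrightarrow> \<not> s k \<Longrightarrow> t < t' \<Longrightarrow>
      f (\<beta>(k := t)) \<gamma> > f (\<beta>(k := t')) \<gamma>"
    and mono: "strict_mono (f b')"
    and b: "b \<in> {0..<K} \<rightarrow>\<^sub>E UNIV" and b': "b' \<in> {0..<K} \<rightarrow>\<^sub>E UNIV"
    and oriented_up: "\<And>k. k < K \<Longrightarrow> s k \<Longrightarrow> b k \<le> b' k"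
    and oriented_down: "\<And>k. k < K \<Longrightarrow> \<not> s k \<Longrightarrow> b' k \<le> b k"
    and "c \<le> c'" and "(b, c) \<noteq> (b', c')"
  shows "f b c < f b' c'"
proof -
  have b_less: "f b c < f b' c" if "b \<noteq> b'"
    using sign_monotone_less[of K s "\<lambda>\<beta>. f \<beta> c"] up down b b' oriented_up oriented_down that
    by blast
  have c_less: "f b' c < f b' c'" if "c < c'"
    using mono that by (simp add: strict_mono_less)
  show ?thesis
  proof (cases "b = b'")
    case True
    then show ?thesis using c_less \<open>c \<le> c'\<close> \<open>(b, c) \<noteq> (b', c')\<close> by auto
  next
    case False
    then show ?thesis using b_less c_less \<open>c \<le> c'\<close> by fastforce
  qed
qed

theorem lemma2:
  fixes K :: nat
    and g :: "(nat \<Rightarrow> bool) \<Rightarrow> (nat \<Rightarrow> real) \<Rightarrow> real \<Rightarrow> real"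
  assumes cont: "\<And>s. s \<in> {0..<K} \<rightarrow>\<^sub>E (UNIV :: bool set) \<Longrightarrow>
      continuous_on (({0..<K} \<rightarrow>\<^sub>E (UNIV :: real set)) \<times> UNIV) (\<lambda>(\<beta>, \<gamma>). g s \<beta> \<gamma>)"
    and mono_gamma: "\<And>s \<beta>. s \<in> {0..<K} \<rightarrow>\<^sub>E (UNIV :: bool set) \<Longrightarrow>
      \<beta> \<in> {0..<K} \<rightarrow>\<^sub>E (UNIV :: real set) \<Longrightarrow> strict_mono (g s \<beta>)"
    and mono_plus: "\<And>s \<beta> \<gamma> k t t'. s \<in> {0..<K} \<rightarrow>\<^sub>E (UNIV :: bool set) \<Longrightarrow>
      \<beta> \<in> {0..<K} \<rightarrow>\<^sub>E (UNIV :: real set) \<Longrightarrow> k < K \<Longrightarrow> s k \<Longrightarrow> t < t' \<Longrightarrow>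
      g s (\<beta>(k := t)) \<gamma> < g s (\<beta>(k := t')) \<gamma>"
    and mono_minus: "\<And>s \<beta> \<gamma> k t t'. s \<in> {0..<K} \<rightarrow>\<^sub>E (UNIV :: bool set) \<Longrightarrow>
      \<beta> \<in> {0..<K} \<rightarrow>\<^sub>E (UNIV :: real set) \<Longrightarrow> k < K \<Longrightarrow> \<not> s k \<Longrightarrow> t < t' \<Longrightarrow>
      g s (\<beta>(k := t)) \<gamma> > g s (\<beta>(k := t')) \<gamma>"
  shows "\<forall>\<beta> \<gamma> \<beta>' \<gamma>'.
      \<beta> \<in> {0..<K} \<rightarrow>\<^sub>E (UNIV :: real set) \<and> \<beta>' \<in> {0..<K} \<rightarrow>\<^sub>E (UNIV :: real set) \<and>
      (\<forall>s \<in> {0..<K} \<rightarrow>\<^sub>E (UNIV :: bool set). g s \<beta> \<gamma> = 0) \<and>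
      (\<forall>s \<in> {0..<K} \<rightarrow>\<^sub>E (UNIV :: bool set). g s \<beta>' \<gamma>' = 0)
      \<longrightarrow> \<beta> = \<beta>' \<and> \<gamma> = \<gamma>'"
proof (intro allI impI, elim conjE)
  fix \<beta> \<gamma> \<beta>' \<gamma>'
  assume \<beta>: "\<beta> \<in> {0..<K} \<rightarrow>\<^sub>E UNIV" and \<beta>': "\<beta>' \<in> {0..<K} \<rightarrow>\<^sub>E UNIV"
    and zero: "\<forall>s \<in> {0..<K} \<rightarrow>\<^sub>E UNIV. g s \<beta> \<gamma> = 0"
    and zero': "\<forall>s \<in> {0..<K} \<rightarrow>\<^sub>E UNIV. g s \<beta>' \<gamma>' = 0"
  have separated: "\<exists>s \<in> {0..<K} \<rightarrow>\<^sub>E UNIV. g s b c < g s b' c'"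
    if b: "b \<in> {0..<K} \<rightarrow>\<^sub>E UNIV" and b': "b' \<in> {0..<K} \<rightarrow>\<^sub>E UNIV"
      and "c \<le> c'" and "(b, c) \<noteq> (b', c')" for b b' c c'
  proof
    let ?s = "restrict (\<lambda>k. b k \<le> b' k) {0..<K}"
    show s: "?s \<in> {0..<K} \<rightarrow>\<^sub>E UNIV" by simp
    show "g ?s b c < g ?s b' c'"
      by (rule sign_monotone_strict_mono_less[OF mono_plus[OF s] mono_minus[OF s] mono_gamma[OF s b']])
        (use that in auto)
  qed
  show "\<beta> = \<beta>' \<and> \<gamma> = \<gamma>'"
    using separated[OF \<beta> \<beta>', of \<gamma> \<gamma>'] separated[OF \<beta>' \<beta>, of \<gamma>' \<gamma>] zero zero'
    by (cases "\<gamma> \<le> \<gamma>'") fastforce+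
qed

end
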